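(* The function $\tilde G$ attains a global maximum on $K$. Moreover, every global maximizer $\alpha^*=(\alpha_1^*,\dots,\alpha_N^* )$ of $\tilde G$ on $K$ satisfies exactly one of the following: (I) $\alpha^*\in\operatorname{Int}(K)$, i.e. $\alpha_j^*>0$ for all $j$ and $\sum_{j=1}^N\alpha_j^*<1$; or (II) there is $n\in\{1,\dots,N-1\}$ with $\alpha_1^*=\dots=\alpha_n^*=0$ and $(\alpha_{n+1}^*,\dots,\alpha_N^* )\in\operatorname{Int}(K_n)$, where $K_n=\{(\alpha_{n+1},\dots,\alpha_N)\in\mathbb{R}^{N-n}:\alpha_j\ge0\ \forall j,\ \sum_{j=n+1}^N\alpha_j\le1\}$. Consequently $\alpha^*$ solves either the system $\partial\tilde G/\partial\alpha_j(\alpha)=0$ for all $j\in\{1,\dots,N\}$ (case I), or the system $\alpha_1=\dots=\alpha_n=0$, $\alpha_{n+1},\dots,\alpha_N\ne0$, $\partial\tilde G/\partial\alpha_j(\alpha)=0$ for $j\in\{n+1,\dots,N\}$ (case II).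
   Context: Durable-good harvesting model. Let $N\ge1$ be an integer, $y_0>0$, $r,\rho\in\mathbb{R}$, and $0\le t_1<t_2<\dots<t_N$ (arrival times in the successive rounds). Let $K=\{\alpha=(\alpha_1,\dots,\alpha_N)\in\mathbb{R}^N:\alpha_j\ge0\ \forall j,\ \sum_{j=1}^N\alpha_j\le1\}$ and $$\tilde G(\alpha)=\sum_{n=1}^N y_0\,\alpha_n\Big(1-\sum_{i=1}^n\alpha_i\Big)e^{t_n(r-\rho)}\prod_{i=1}^{n-1}(1-\alpha_i).$$ *)

theory Defs
  imports "HOL-Analysis.Analysis"
begin

text \<open>Vectors alpha = (alpha_1,...,alpha_N) are represented as functions nat => real,
  of which only the values at indices 1..N are relevant.\<close>

definition Gt :: "nat \<Rightarrow> real \<Rightarrow> real \<Rightarrow> real \<Rightarrow> (nat \<Rightarrow> real) \<Rightarrow> (nat \<Rightarrow> real) \<Rightarrow> real" where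
  "Gt N y0 r \<rho> t \<alpha> =
     (\<Sum>n=1..N. y0 * \<alpha> n * (1 - (\<Sum>i=1..n. \<alpha> i)) * exp (t n * (r - \<rho>))
                  * (\<Prod>i=1..n-1. (1 - \<alpha> i)))"

definition Kset :: "nat \<Rightarrow> (nat \<Rightarrow> real) set" where
  "Kset N = {\<alpha>. (\<forall>j\<in>{1..N}. 0 \<le> \<alpha> j) \<and> (\<Sum>j=1..N. \<alpha> j) \<le> 1}"

text \<open>Interior of K_n (the coordinates n+1..N); n = 0 gives Int(K).\<close>
definition inIntK :: "nat \<Rightarrow> nat \<Rightarrow> (nat \<Rightarrow> real) \<Rightarrow> bool" where
  "inIntK N n \<alpha> \<longleftrightarrow> (\<forall>j\<in>{n+1..N}. 0 < \<alpha> j) \<and> (\<Sum>j=n+1..N. \<alpha> j) < 1"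

definition partial_zero :: "((nat \<Rightarrow> real) \<Rightarrow> real) \<Rightarrow> nat \<Rightarrow> (nat \<Rightarrow> real) \<Rightarrow> bool" where
  "partial_zero F j \<alpha> \<longleftrightarrow> ((\<lambda>s. F (\<alpha>(j := s))) has_real_derivative 0) (at (\<alpha> j))"

end

theory Submission
  imports Defs
begin

text \<open>At a maximiser nothing is gained by local rearrangements of the rates. If the whole stock
  were taken, halving the last positive rate would give its round a positive yield; if the last
  rate vanished, part of the remaining stock could be taken in round \<open>N\<close>. Swapping a zero rate in
  round \<open>j + 1\<close> with the rate of round \<open>j\<close> changes the harvest by the undiscounted yield of round
  \<open>j\<close> times \<open>c (j + 1) - c j\<close>, where \<open>c n = y0 * exp (t n * (r - \<rho>))\<close>. For \<open>r > \<rho>\<close> the factors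
  increase, so no positive rate precedes a zero one; otherwise they do not increase, so a zero rate
  can be moved to the end without loss. Hence the zero rates form an initial segment followed by an
  interior point of the remaining simplex, where the partial derivatives vanish by Fermat's rule.\<close>

definition cum :: "(nat \<Rightarrow> real) \<Rightarrow> nat \<Rightarrow> real" where
  "cum \<alpha> n = (\<Sum>i=1..n. \<alpha> i)"

definition surv :: "(nat \<Rightarrow> real) \<Rightarrow> nat \<Rightarrow> real" where
  "surv \<alpha> n = (\<Prod>i=1..n. 1 - \<alpha> i)"

definition stake :: "(nat \<Rightarrow> real) \<Rightarrow> nat \<Rightarrow> real" where
  "stake \<alpha> n = \<alpha> n * (1 - cum \<alpha> n) * surv \<alpha> (n - 1)"

definition harvest :: "(nat \<Rightarrow> real) \<Rightarrow> nat \<Rightarrow> (nat \<Rightarrow> real) \<Rightarrow> real" where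
  "harvest c N \<alpha> = (\<Sum>n=1..N. c n * stake \<alpha> n)"

definition improvable :: "(nat \<Rightarrow> real) \<Rightarrow> nat \<Rightarrow> (nat \<Rightarrow> real) \<Rightarrow> bool" where
  "improvable c N \<alpha> \<longleftrightarrow> (\<exists>\<beta>\<in>Kset N. harvest c N \<alpha> < harvest c N \<beta>)"

lemma Gt_eq_harvest: "Gt N y0 r \<rho> t = harvest (\<lambda>n. y0 * exp (t n * (r - \<rho>))) N"
  unfolding Gt_def harvest_def stake_def cum_def surv_def by (intro ext sum.cong) auto

lemma cum_0 [simp]: "cum \<alpha> 0 = 0"
  by (simp add: cum_def)

lemma cum_Suc [simp]: "cum \<alpha> (Suc n) = cum \<alpha> n + \<alpha> (Suc n)"
  by (simp add: cum_def)

lemma surv_0 [simp]: "surv \<alpha> 0 = 1"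
  by (simp add: surv_def)

lemma surv_Suc [simp]: "surv \<alpha> (Suc n) = surv \<alpha> n * (1 - \<alpha> (Suc n))"
  by (simp add: surv_def)

lemma cum_cong: "(\<And>i. i \<in> {1..n} \<Longrightarrow> \<alpha> i = \<beta> i) \<Longrightarrow> cum \<alpha> n = cum \<beta> n"
  unfolding cum_def by (rule sum.cong) auto

lemma surv_cong: "(\<And>i. i \<in> {1..n} \<Longrightarrow> \<alpha> i = \<beta> i) \<Longrightarrow> surv \<alpha> n = surv \<beta> n"
  unfolding surv_def by (rule prod.cong) auto

lemma stake_cong:
  assumes "n \<ge> 1" "\<And>i. i \<in> {1..n} \<Longrightarrow> \<alpha> i = \<beta> i"
  shows "stake \<alpha> n = stake \<beta> n"
proof -
  have "cum \<alpha> n = cum \<beta> n" "surv \<alpha> (n - 1) = surv \<beta> (n - 1)" "\<alpha> n = \<beta> n"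
    using assms by (auto intro!: cum_cong surv_cong)
  then show ?thesis
    unfolding stake_def by simp
qed

lemma harvest_cong: "(\<And>i. i \<in> {1..N} \<Longrightarrow> \<alpha> i = \<beta> i) \<Longrightarrow> harvest c N \<alpha> = harvest c N \<beta>"
  unfolding harvest_def by (intro sum.cong refl arg_cong[where f="(*) _"] stake_cong) auto

lemma cum_eq_if_zero_beyond:
  assumes "m \<le> n" "\<And>i. i \<in> {m<..n} \<Longrightarrow> \<alpha> i = 0"
  shows "cum \<alpha> n = cum \<alpha> m"
  using assms by (induction n rule: dec_induct) auto

lemma cum_transpose:
  assumes "j \<in> {1..n}" "k \<in> {1..n}"
  shows "cum (\<alpha> \<circ> Transposition.transpose j k) n = cum \<alpha> n"
  unfolding cum_def using sum.permute[OF permutes_swap_id[OF assms], of \<alpha>] by simp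

lemma surv_transpose:
  assumes "j \<in> {1..n}" "k \<in> {1..n}"
  shows "surv (\<alpha> \<circ> Transposition.transpose j k) n = surv \<alpha> n"
  unfolding surv_def using prod.permute[OF permutes_swap_id[OF assms], of "\<lambda>i. 1 - \<alpha> i"]
  by (simp add: comp_def)

lemma Kset_iff: "\<alpha> \<in> Kset N \<longleftrightarrow> (\<forall>j\<in>{1..N}. 0 \<le> \<alpha> j) \<and> cum \<alpha> N \<le> 1"
  by (simp add: Kset_def cum_def)

lemma cum_mono:
  assumes "\<alpha> \<in> Kset N" "n \<le> m" "m \<le> N"
  shows "cum \<alpha> n \<le> cum \<alpha> m"
  using assms unfolding Kset_iff cum_def by (intro sum_mono2) auto

lemma member_le_cum:
  assumes "\<alpha> \<in> Kset N" "i \<in> {1..n}" "n \<le> N"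
  shows "\<alpha> i \<le> cum \<alpha> n"
  using assms unfolding Kset_iff cum_def by (intro member_le_sum) auto

lemma surv_nonneg:
  assumes "\<alpha> \<in> Kset N" "n \<le> N"
  shows "0 \<le> surv \<alpha> n"
  unfolding surv_def
proof (rule prod_nonneg)
  fix i assume "i \<in> {1..n}"
  then show "0 \<le> 1 - \<alpha> i"
    using member_le_cum[OF assms(1), of i N] cum_mono[OF assms(1), of N N] assms
    by (auto simp: Kset_iff)
qed

lemma surv_pos:
  assumes "\<alpha> \<in> Kset N" "n \<le> N" "cum \<alpha> n < 1"
  shows "0 < surv \<alpha> n"
  unfolding surv_def
proof (rule prod_pos)
  fix i assume "i \<in> {1..n}"
  then show "0 < 1 - \<alpha> i"
    using member_le_cum[OF assms(1) _ assms(2), of i] assms(3) by auto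
qed

lemma stake_nonneg:
  assumes "\<alpha> \<in> Kset N" "n \<in> {1..N}"
  shows "0 \<le> stake \<alpha> n"
proof -
  have "cum \<alpha> n \<le> 1"
    using cum_mono[OF assms(1), of n N] assms by (auto simp: Kset_iff)
  then show ?thesis
    using assms surv_nonneg[OF assms(1), of "n - 1"] unfolding stake_def Kset_iff by auto
qed

lemma stake_pos:
  assumes "\<alpha> \<in> Kset N" "n \<in> {1..N}" "0 < \<alpha> n" "cum \<alpha> N < 1"
  shows "0 < stake \<alpha> n"
proof -
  have "cum \<alpha> (n - 1) \<le> cum \<alpha> n" "cum \<alpha> n \<le> cum \<alpha> N"
    using assms by (auto intro: cum_mono)
  then show ?thesis
    using assms surv_pos[OF assms(1), of "n - 1"] unfolding stake_def
    by (intro mult_pos_pos) auto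
qed

lemma Kset_transpose:
  assumes "\<alpha> \<in> Kset N" "j \<in> {1..N}" "k \<in> {1..N}"
  shows "\<alpha> \<circ> Transposition.transpose j k \<in> Kset N"
  using assms unfolding Kset_iff cum_transpose[OF assms(2,3)]
  by (auto simp: Transposition.transpose_def)

lemma harvest_transpose:
  assumes "1 \<le> j" "Suc j \<le> N" "\<alpha> (Suc j) = 0"
  shows "harvest c N (\<alpha> \<circ> Transposition.transpose j (Suc j))
           = harvest c N \<alpha> + stake \<alpha> j * (c (Suc j) - c j)"
proof -
  define \<delta> where "\<delta> = \<alpha> \<circ> Transposition.transpose j (Suc j)"
  have unchanged: "stake \<delta> n = stake \<alpha> n" if n: "n \<in> {1..N} - {j, Suc j}" for n
  proof (cases "n < j")
    case True
    then show ?thesis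
      using n by (intro stake_cong) (auto simp: \<delta>_def Transposition.transpose_def)
  next
    case False
    then have "j \<in> {1..n - 1}" "Suc j \<in> {1..n - 1}" "\<delta> n = \<alpha> n"
      using n assms by (auto simp: \<delta>_def)
    then show ?thesis
      using n unfolding stake_def \<delta>_def
      by (simp add: cum_transpose surv_transpose)
  qed
  have "stake \<delta> (Suc j) = stake \<alpha> j"
  proof -
    obtain i where i: "j = Suc i"
      using assms(1) by (cases j) auto
    have "surv \<delta> i = surv \<alpha> i"
      by (rule surv_cong) (auto simp: \<delta>_def i)
    then have "surv \<delta> j = surv \<alpha> (j - 1)"
      using assms by (simp add: \<delta>_def i)
    moreover have "cum \<delta> (Suc j) = cum \<alpha> j"
      using assms cum_transpose[of j "Suc j" "Suc j" \<alpha>] by (simp add: \<delta>_def)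
    moreover have "\<delta> (Suc j) = \<alpha> j"
      by (simp add: \<delta>_def)
    ultimately show ?thesis
      unfolding stake_def by simp
  qed
  moreover have "stake \<delta> j = 0" "stake \<alpha> (Suc j) = 0"
    using assms by (auto simp: stake_def \<delta>_def)
  moreover have "harvest c N \<beta> = (\<Sum>n\<in>{1..N} - {j, Suc j}. c n * stake \<beta> n)
                    + c j * stake \<beta> j + c (Suc j) * stake \<beta> (Suc j)" for \<beta>
    using assms unfolding harvest_def by (subst sum.subset_diff[of "{j, Suc j}"]) auto
  ultimately show ?thesis
    using unchanged unfolding \<delta>_def[symmetric] by (simp add: algebra_simps)
qed

lemma improvable_if_last_round_idle:
  assumes K: "\<alpha> \<in> Kset N" and m: "m \<in> {1..N}" and tail: "\<And>n. n \<in> {m<..N} \<Longrightarrow> \<alpha> n = 0"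
    and idle: "stake \<alpha> m = 0" and room: "cum \<alpha> (m - 1) < 1" and c: "0 < c m"
  shows "improvable c N \<alpha>"
proof -
  define x where "x = (1 - cum \<alpha> (m - 1)) / 2"
  define \<beta> where "\<beta> = \<alpha>(m := x)"
  obtain m' where m': "m = Suc m'"
    using m by (cases m) auto
  have cum_\<beta>: "cum \<beta> m = cum \<alpha> (m - 1) + x"
    using cum_cong[of m' \<beta> \<alpha>] by (simp add: \<beta>_def m')
  have "surv \<beta> (m - 1) = surv \<alpha> (m - 1)"
    by (rule surv_cong) (simp add: \<beta>_def m')
  then have gain: "stake \<beta> m = x * x * surv \<alpha> (m - 1)"
    unfolding stake_def cum_\<beta> by (simp add: \<beta>_def x_def field_simps)
  have "0 < surv \<alpha> (m - 1)"
    using surv_pos[OF K _ room] m by auto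
  then have "0 < stake \<beta> m"
    unfolding gain using room by (simp add: x_def)
  have same: "stake \<beta> n = stake \<alpha> n" if n: "n \<in> {1..N} - {m}" for n
  proof (cases "n < m")
    case True
    then show ?thesis
      using n by (intro stake_cong) (auto simp: \<beta>_def)
  next
    case False
    then show ?thesis
      using tail[of n] n by (auto simp: stake_def \<beta>_def)
  qed
  have "harvest c N \<gamma> = c m * stake \<gamma> m + (\<Sum>n\<in>{1..N} - {m}. c n * stake \<gamma> n)" for \<gamma>
    unfolding harvest_def using m by (intro sum.remove) auto
  then have "harvest c N \<beta> = harvest c N \<alpha> + c m * stake \<beta> m"
    using same idle by simp
  then have "harvest c N \<alpha> < harvest c N \<beta>"
    using c \<open>0 < stake \<beta> m\<close> by simp
  moreover have "\<beta> \<in> Kset N"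
  proof -
    have "cum \<beta> N = cum \<beta> m"
      using m tail by (intro cum_eq_if_zero_beyond) (auto simp: \<beta>_def)
    then have "cum \<beta> N < 1"
      using room by (simp add: cum_\<beta> x_def field_simps)
    then show ?thesis
      using K room by (auto simp: Kset_iff \<beta>_def x_def)
  qed
  ultimately show ?thesis
    unfolding improvable_def by blast
qed

lemma cum_lt_one_if_not_improvable:
  assumes K: "\<alpha> \<in> Kset N" and opt: "\<not> improvable c N \<alpha>" and c: "\<And>n. 0 < c n"
  shows "cum \<alpha> N < 1"
proof (rule ccontr)
  assume "\<not> cum \<alpha> N < 1"
  then have full: "cum \<alpha> N = 1"
    using K by (simp add: Kset_iff)
  define P where "P = {j \<in> {1..N}. 0 < \<alpha> j}"
  have "P \<noteq> {}"
  proof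
    assume "P = {}"
    then have "cum \<alpha> N = 0"
      using K unfolding P_def Kset_iff cum_def by (force intro: sum.neutral)
    then show False
      using full by simp
  qed
  have "finite P"
    by (simp add: P_def)
  define m where "m = Max P"
  have "m \<in> P"
    unfolding m_def using \<open>finite P\<close> \<open>P \<noteq> {}\<close> by (rule Max_in)
  then have m: "m \<in> {1..N}" "0 < \<alpha> m"
    by (auto simp: P_def)
  have tail: "\<alpha> n = 0" if "n \<in> {m<..N}" for n
  proof -
    have "n \<notin> P"
      using that Max_ge[OF \<open>finite P\<close>, of n] unfolding m_def by auto
    moreover have "0 \<le> \<alpha> n"
      using that m K by (simp add: Kset_iff)
    ultimately show ?thesis
      using that m by (auto simp: P_def)
  qed
  have "cum \<alpha> m = 1"
    using full cum_eq_if_zero_beyond[of m N \<alpha>] tail m by auto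
  moreover have "cum \<alpha> m = cum \<alpha> (m - 1) + \<alpha> m"
    using m by (cases m) auto
  ultimately have "stake \<alpha> m = 0" "cum \<alpha> (m - 1) < 1"
    using m by (auto simp: stake_def)
  then show False
    using improvable_if_last_round_idle[OF K m(1) tail] c opt by blast
qed

lemma last_pos_if_not_improvable:
  assumes K: "\<alpha> \<in> Kset N" and opt: "\<not> improvable c N \<alpha>" and c: "\<And>n. 0 < c n"
    and room: "cum \<alpha> N < 1" and N: "1 \<le> N"
  shows "0 < \<alpha> N"
proof (rule ccontr)
  assume "\<not> 0 < \<alpha> N"
  moreover have "0 \<le> \<alpha> N"
    using K N by (simp add: Kset_iff)
  ultimately have "stake \<alpha> N = 0"
    by (simp add: stake_def)
  moreover have "cum \<alpha> (N - 1) < 1"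
    using cum_mono[OF K, of "N - 1" N] room by simp
  ultimately show False
    using improvable_if_last_round_idle[OF K, of N] N c opt by auto
qed

lemma improvable_if_zero_round:
  assumes K: "\<alpha> \<in> Kset N" and room: "cum \<alpha> N < 1" and j: "j \<in> {1..N}" and zero: "\<alpha> j = 0"
    and c: "\<And>n. 0 < c n" and c_dec: "\<And>m. m \<in> {1..<N} \<Longrightarrow> c (Suc m) \<le> c m"
  shows "improvable c N \<alpha>"
  using K room j zero
proof (induction "N - j" arbitrary: \<alpha> j)
  case 0
  then have "j = N" "cum \<alpha> (N - 1) < 1"
    using cum_mono[of \<alpha> N "N - 1" N] by auto
  then show ?case
    using 0 c improvable_if_last_round_idle[of \<alpha> N N c] by (auto simp: stake_def)
next
  case (Suc k)
  define \<gamma> where "\<gamma> = \<alpha> \<circ> Transposition.transpose j (Suc j)"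
  have j': "j \<in> {1..N}" "Suc j \<in> {1..N}"
    using Suc by auto
  have \<gamma>: "\<gamma> \<in> Kset N" "cum \<gamma> N = cum \<alpha> N" "\<gamma> (Suc j) = 0"
    using Kset_transpose[OF Suc(3) j'] cum_transpose[OF j'] Suc by (auto simp: \<gamma>_def)
  have "\<gamma> \<circ> Transposition.transpose j (Suc j) = \<alpha>"
    by (simp add: \<gamma>_def comp_assoc)
  then have "harvest c N \<alpha> = harvest c N \<gamma> + stake \<gamma> j * (c (Suc j) - c j)"
    using harvest_transpose[of j N \<gamma> c] j' \<gamma>(3) by simp
  also have "\<dots> \<le> harvest c N \<gamma>"
    using stake_nonneg[OF \<gamma>(1) j'(1)] c_dec[of j] j'
    by (simp add: mult_nonneg_nonpos)
  finally have "harvest c N \<alpha> \<le> harvest c N \<gamma>" .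
  moreover have "k = N - Suc j"
    using Suc.hyps(2) by simp
  then have "improvable c N \<gamma>"
    using Suc.prems(2) \<gamma> j'(2) by (intro Suc.hyps(1)) simp_all
  ultimately show ?case
    unfolding improvable_def by force
qed

lemma pos_Suc_if_not_improvable:
  assumes K: "\<alpha> \<in> Kset N" and opt: "\<not> improvable c N \<alpha>" and c: "\<And>n. 0 < c n"
    and room: "cum \<alpha> N < 1"
    and c_mono: "(\<forall>m\<in>{1..<N}. c m < c (Suc m)) \<or> (\<forall>m\<in>{1..<N}. c (Suc m) \<le> c m)"
    and j: "j \<in> {1..<N}" and pos: "0 < \<alpha> j"
  shows "0 < \<alpha> (Suc j)"
proof (rule ccontr)
  assume "\<not> 0 < \<alpha> (Suc j)"
  moreover have "0 \<le> \<alpha> (Suc j)"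
    using K j by (simp add: Kset_iff)
  ultimately have zero: "\<alpha> (Suc j) = 0"
    by simp
  have j': "j \<in> {1..N}" "Suc j \<in> {1..N}"
    using j by auto
  from c_mono show False
  proof
    assume "\<forall>m\<in>{1..<N}. c m < c (Suc m)"
    then have "0 < stake \<alpha> j * (c (Suc j) - c j)"
      using stake_pos[OF K j'(1) pos room] j by simp
    then have "harvest c N \<alpha> < harvest c N (\<alpha> \<circ> Transposition.transpose j (Suc j))"
      using harvest_transpose[of j N \<alpha> c] j zero by simp
    then show False
      using opt Kset_transpose[OF K j'] unfolding improvable_def by blast
  next
    assume "\<forall>m\<in>{1..<N}. c (Suc m) \<le> c m"
    then show False
      using improvable_if_zero_round[OF K room j'(2) zero c] opt by simp
  qed
qed

lemma zero_prefix_if_no_gap: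
  fixes \<alpha> :: "nat \<Rightarrow> real"
  assumes nonneg: "\<And>j. j \<in> {1..N} \<Longrightarrow> 0 \<le> \<alpha> j" and last: "0 < \<alpha> N" and N: "1 \<le> N"
    and no_gap: "\<And>j. j \<in> {1..<N} \<Longrightarrow> 0 < \<alpha> j \<Longrightarrow> 0 < \<alpha> (Suc j)"
  shows "\<exists>n<N. (\<forall>j\<in>{1..n}. \<alpha> j = 0) \<and> (\<forall>j\<in>{n+1..N}. 0 < \<alpha> j)"
proof -
  have up: "0 < \<alpha> j" if "0 < \<alpha> i" "1 \<le> i" "i \<le> j" "j \<le> N" for i j
    using that(3,4)
  proof (induction j rule: dec_induct)
    case (step j)
    then show ?case
      using no_gap[of j] that(2) by auto
  qed (use that in auto)
  define n where "n = (LEAST k. 0 < \<alpha> (Suc k))"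
  have "0 < \<alpha> (Suc (N - 1))"
    using last N by simp
  then have n: "0 < \<alpha> (Suc n)" "n \<le> N - 1"
    unfolding n_def by (auto intro: LeastI Least_le)
  have "\<alpha> j = 0" if j: "j \<in> {1..n}" for j
  proof -
    have "\<not> 0 < \<alpha> (Suc (j - 1))"
      using j unfolding n_def by (intro not_less_Least) auto
    then show ?thesis
      using nonneg[of j] j n by auto
  qed
  moreover have "0 < \<alpha> j" if "j \<in> {n+1..N}" for j
    using up[OF n(1)] that by auto
  ultimately show ?thesis
    using n N by (intro exI[of _ n]) auto
qed

lemma differentiable_prod:
  fixes f :: "'i \<Rightarrow> real \<Rightarrow> real"
  assumes "\<And>i. i \<in> A \<Longrightarrow> f i differentiable (at x)"
  shows "(\<lambda>s. \<Prod>i\<in>A. f i s) differentiable (at x)"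
  using assms by (induction A rule: infinite_finite_induct) (auto intro: differentiable_mult)

lemma harvest_differentiable_coordinate: "(\<lambda>s. harvest c N (\<alpha>(j := s))) differentiable (at x)"
proof -
  have "(\<lambda>s. (\<alpha>(j := s)) i) differentiable (at x)" for i
    by (cases "i = j") auto
  then show ?thesis
    unfolding harvest_def stake_def cum_def surv_def
    by (auto intro!: differentiable_sum differentiable_mult differentiable_diff differentiable_prod)
qed

lemma partial_zero_if_local_max:
  assumes "(\<lambda>s. F (\<alpha>(j := s))) differentiable (at (\<alpha> j))" "0 < d"
    and "\<And>s. \<bar>s - \<alpha> j\<bar> < d \<Longrightarrow> F (\<alpha>(j := s)) \<le> F \<alpha>"
  shows "partial_zero F j \<alpha>"
proof -
  obtain D where D: "((\<lambda>s. F (\<alpha>(j := s))) has_real_derivative D) (at (\<alpha> j))"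
    using assms(1) by (auto simp: real_differentiable_def)
  have "D = 0"
    using assms(3) by (intro DERIV_local_max[OF D assms(2)]) (simp add: abs_minus_commute)
  then show ?thesis
    using D by (simp add: partial_zero_def)
qed

lemma partial_zero_harvest_at_max:
  assumes K: "\<alpha> \<in> Kset N" and max: "\<forall>\<beta>\<in>Kset N. harvest c N \<beta> \<le> harvest c N \<alpha>"
    and j: "j \<in> {1..N}" and pos: "0 < \<alpha> j" and room: "cum \<alpha> N < 1"
  shows "partial_zero (harvest c N) j \<alpha>"
proof (rule partial_zero_if_local_max)
  show "0 < min (\<alpha> j) (1 - cum \<alpha> N)"
    using pos room by simp
  fix s assume s: "\<bar>s - \<alpha> j\<bar> < min (\<alpha> j) (1 - cum \<alpha> N)"
  have "cum \<gamma> N = \<gamma> j + (\<Sum>i\<in>{1..N} - {j}. \<gamma> i)" for \<gamma>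
    using j unfolding cum_def by (intro sum.remove) auto
  moreover have "(\<Sum>i\<in>{1..N} - {j}. (\<alpha>(j := s)) i) = (\<Sum>i\<in>{1..N} - {j}. \<alpha> i)"
    by (rule sum.cong) auto
  ultimately have "cum (\<alpha>(j := s)) N = cum \<alpha> N + (s - \<alpha> j)"
    by simp
  moreover have "0 < s" "s - \<alpha> j < 1 - cum \<alpha> N"
    using s by linarith+
  ultimately have "\<alpha>(j := s) \<in> Kset N"
    using K by (auto simp: Kset_iff)
  then show "harvest c N (\<alpha>(j := s)) \<le> harvest c N \<alpha>"
    using max by blast
qed (rule harvest_differentiable_coordinate)

lemma harvest_attains_max: "\<exists>\<alpha>\<in>Kset N. \<forall>\<beta>\<in>Kset N. harvest c N \<beta> \<le> harvest c N \<alpha>"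
proof -
  define C where "C = (PiE UNIV (\<lambda>i. if i \<in> {1..N} then {0..1} else {0}))
                        \<inter> {\<alpha>::nat \<Rightarrow> real. cum \<alpha> N \<le> 1}"
  have coord: "continuous_on UNIV (\<lambda>\<alpha>::nat \<Rightarrow> real. \<alpha> i)" for i
    by (rule continuous_on_product_then_coordinatewise[OF continuous_on_id])
  have "compactin (product_topology (\<lambda>_. euclidean) UNIV)
          (PiE UNIV (\<lambda>i. if i \<in> {1..N} then {0..1::real} else {0}))"
    unfolding compactin_PiE by auto
  then have "compact (PiE UNIV (\<lambda>i. if i \<in> {1..N} then {0..1::real} else {0}))"
    by (simp add: euclidean_product_topology)
  moreover have "closed {\<alpha>::nat \<Rightarrow> real. cum \<alpha> N \<le> 1}"
    unfolding cum_def by (intro closed_Collect_le continuous_intros coord)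
  ultimately have "compact C"
    unfolding C_def by (rule compact_Int_closed)
  moreover have "(\<lambda>_. 0) \<in> C"
    by (auto simp: C_def cum_def PiE_iff)
  moreover have "continuous_on C (harvest c N)"
    unfolding harvest_def stake_def cum_def surv_def
    by (intro continuous_intros continuous_on_subset[OF coord]) auto
  ultimately obtain \<alpha> where \<alpha>: "\<alpha> \<in> C" "\<forall>\<beta>\<in>C. harvest c N \<beta> \<le> harvest c N \<alpha>"
    using continuous_attains_sup[of C "harvest c N"] by blast
  have "\<alpha> \<in> Kset N"
  proof -
    have "\<alpha> j \<in> {0..1}" if "j \<in> {1..N}" for j
    proof -
      have "\<alpha> j \<in> (if j \<in> {1..N} then {0..1} else {0})"
        using \<alpha>(1) unfolding C_def PiE_iff by blast
      then show ?thesis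
        using that by (simp only: if_True)
    qed
    then show ?thesis
      using \<alpha>(1) by (auto simp: C_def Kset_iff)
  qed
  moreover have "harvest c N \<beta> \<le> harvest c N \<alpha>" if \<beta>: "\<beta> \<in> Kset N" for \<beta>
  proof -
    define \<beta>' where "\<beta>' = (\<lambda>i. if i \<in> {1..N} then \<beta> i else 0)"
    have "\<beta> i \<le> 1" if "i \<in> {1..N}" for i
      using member_le_cum[OF \<beta> that] \<beta> by (auto simp: Kset_iff)
    moreover have "cum \<beta>' N = cum \<beta> N"
      by (rule cum_cong) (simp add: \<beta>'_def)
    ultimately have "\<beta>' \<in> C"
      using \<beta> by (auto simp: C_def \<beta>'_def Kset_iff)
    moreover have "harvest c N \<beta> = harvest c N \<beta>'"
      by (rule harvest_cong) (simp add: \<beta>'_def)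
    ultimately show ?thesis
      using \<alpha>(2) by simp
  qed
  ultimately show ?thesis
    by blast
qed

lemma inIntK_if_zero_prefix:
  assumes K: "\<alpha> \<in> Kset N" and room: "cum \<alpha> N < 1" and pos: "\<forall>j\<in>{n+1..N}. 0 < \<alpha> j"
  shows "inIntK N n \<alpha>"
proof -
  have "(\<Sum>j=n+1..N. \<alpha> j) \<le> cum \<alpha> N"
    using K unfolding Kset_iff cum_def by (intro sum_mono2) auto
  then show ?thesis
    using room pos by (simp add: inIntK_def)
qed

lemma maximiser_shape:
  assumes K: "\<alpha> \<in> Kset N" and max: "\<forall>\<beta>\<in>Kset N. harvest c N \<beta> \<le> harvest c N \<alpha>"
    and N: "1 \<le> N"
    and c: "\<And>n. 0 < c n"
    and c_mono: "(\<forall>m\<in>{1..<N}. c m < c (Suc m)) \<or> (\<forall>m\<in>{1..<N}. c (Suc m) \<le> c m)"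
  shows "cum \<alpha> N < 1" "\<exists>n<N. (\<forall>j\<in>{1..n}. \<alpha> j = 0) \<and> inIntK N n \<alpha>"
proof -
  have opt: "\<not> improvable c N \<alpha>"
    using max by (auto simp: improvable_def not_less)
  show room: "cum \<alpha> N < 1"
    using cum_lt_one_if_not_improvable[OF K opt c] .
  have "\<exists>n<N. (\<forall>j\<in>{1..n}. \<alpha> j = 0) \<and> (\<forall>j\<in>{n+1..N}. 0 < \<alpha> j)"
    using K last_pos_if_not_improvable[OF K opt c room N] N
      pos_Suc_if_not_improvable[OF K opt c room c_mono]
    by (intro zero_prefix_if_no_gap) (auto simp: Kset_iff)
  then show "\<exists>n<N. (\<forall>j\<in>{1..n}. \<alpha> j = 0) \<and> inIntK N n \<alpha>"
    using inIntK_if_zero_prefix[OF K room] by blast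
qed

lemma inIntK_dichotomy:
  assumes "1 \<le> N" and "n < N" and zero: "\<forall>j\<in>{1..n}. \<alpha> j = 0" and int: "inIntK N n \<alpha>"
  shows "(inIntK N 0 \<alpha> \<and> \<not> (\<exists>m\<in>{1..N-1}. (\<forall>j\<in>{1..m}. \<alpha> j = 0) \<and> inIntK N m \<alpha>))
       \<or> (\<not> inIntK N 0 \<alpha> \<and> (\<exists>m\<in>{1..N-1}. (\<forall>j\<in>{1..m}. \<alpha> j = 0) \<and> inIntK N m \<alpha>))"
proof (cases "n = 0")
  case True
  then have "0 < \<alpha> 1"
    using int assms(1) by (force simp: inIntK_def)
  then show ?thesis
    using int True by force
next
  case False
  then have "\<not> inIntK N 0 \<alpha>"
    using zero assms(1) by (force simp: inIntK_def)
  then show ?thesis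
    using False assms by force
qed

lemma exp_scaled_mono_or_antimono:
  fixes t :: "nat \<Rightarrow> real" and a y0 :: real
  assumes t: "\<forall>i\<in>{1..<N}. t i < t (i + 1)" and y0: "0 < y0"
  defines "c \<equiv> \<lambda>n. y0 * exp (t n * a)"
  shows "(\<forall>m\<in>{1..<N}. c m < c (Suc m)) \<or> (\<forall>m\<in>{1..<N}. c (Suc m) \<le> c m)"
proof (cases "0 < a")
  case True
  then show ?thesis
    using t y0 by (auto simp: c_def)
next
  case False
  then have "t (Suc m) * a \<le> t m * a" if "m \<in> {1..<N}" for m
    using t that by (intro mult_right_mono_neg) (auto intro: less_imp_le)
  then show ?thesis
    using y0 by (simp add: c_def)
qed

theorem proposition4:
  fixes N :: nat and y0 r \<rho> :: real and t :: "nat \<Rightarrow> real"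
  assumes "1 \<le> N" and "0 < y0"
    and "0 \<le> t 1" and "\<forall>i\<in>{1..<N}. t i < t (i+1)"
  shows "(\<exists>\<alpha>\<in>Kset N. \<forall>\<beta>\<in>Kset N. Gt N y0 r \<rho> t \<beta> \<le> Gt N y0 r \<rho> t \<alpha>)
    \<and> (\<forall>\<alpha>\<in>Kset N. (\<forall>\<beta>\<in>Kset N. Gt N y0 r \<rho> t \<beta> \<le> Gt N y0 r \<rho> t \<alpha>) \<longrightarrow>
         ((inIntK N 0 \<alpha> \<and> \<not> (\<exists>n\<in>{1..N-1}. (\<forall>j\<in>{1..n}. \<alpha> j = 0) \<and> inIntK N n \<alpha>))
          \<or> (\<not> inIntK N 0 \<alpha> \<and> (\<exists>n\<in>{1..N-1}. (\<forall>j\<in>{1..n}. \<alpha> j = 0) \<and> inIntK N n \<alpha>)))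
       \<and> (inIntK N 0 \<alpha> \<longrightarrow> (\<forall>j\<in>{1..N}. partial_zero (Gt N y0 r \<rho> t) j \<alpha>))
       \<and> (\<forall>n\<in>{1..N-1}. ((\<forall>j\<in>{1..n}. \<alpha> j = 0) \<and> inIntK N n \<alpha>) \<longrightarrow>
            (\<forall>j\<in>{n+1..N}. \<alpha> j \<noteq> 0 \<and> partial_zero (Gt N y0 r \<rho> t) j \<alpha>)))"
proof -
  define c where "c n = y0 * exp (t n * (r - \<rho>))" for n
  have G: "Gt N y0 r \<rho> t = harvest c N"
    unfolding c_def by (rule Gt_eq_harvest)
  have c: "\<And>n. 0 < c n"
    using assms(2) by (simp add: c_def)
  have mono: "(\<forall>m\<in>{1..<N}. c m < c (Suc m)) \<or> (\<forall>m\<in>{1..<N}. c (Suc m) \<le> c m)"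
    using exp_scaled_mono_or_antimono[OF assms(4,2), of "r - \<rho>"] by (simp add: c_def)
  show ?thesis
    unfolding G
  proof (intro conjI ballI impI harvest_attains_max)
    fix \<alpha> assume K: "\<alpha> \<in> Kset N" and max: "\<forall>\<beta>\<in>Kset N. harvest c N \<beta> \<le> harvest c N \<alpha>"
    obtain n where room: "cum \<alpha> N < 1" and "n < N" "\<forall>j\<in>{1..n}. \<alpha> j = 0" "inIntK N n \<alpha>"
      using maximiser_shape[OF K max assms(1) c mono] by blast
    then show "(inIntK N 0 \<alpha> \<and> \<not> (\<exists>n\<in>{1..N-1}. (\<forall>j\<in>{1..n}. \<alpha> j = 0) \<and> inIntK N n \<alpha>))
          \<or> (\<not> inIntK N 0 \<alpha> \<and> (\<exists>n\<in>{1..N-1}. (\<forall>j\<in>{1..n}. \<alpha> j = 0) \<and> inIntK N n \<alpha>))"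
      using inIntK_dichotomy[OF assms(1)] by blast
    show "partial_zero (harvest c N) j \<alpha>" if "inIntK N 0 \<alpha>" "j \<in> {1..N}" for j
      using that partial_zero_harvest_at_max[OF K max _ _ room] by (simp add: inIntK_def)
    show "\<alpha> j \<noteq> 0" and "partial_zero (harvest c N) j \<alpha>"
      if "(\<forall>j\<in>{1..m}. \<alpha> j = 0) \<and> inIntK N m \<alpha>" "j \<in> {m+1..N}" for m j
    proof -
      have "0 < \<alpha> j"
        using that unfolding inIntK_def by blast
      then show "\<alpha> j \<noteq> 0" "partial_zero (harvest c N) j \<alpha>"
        using that(2) partial_zero_harvest_at_max[OF K max _ _ room] by simp_all
    qed
  qed
qed

end
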